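(* Let $F$ be a field, $G$ a finite group, $V$ a finite-dimensional $FG$-module, $R:=S[V]^G$, and let $\mathcal F=\{f_1,\dots,f_n\}\subseteq R$ be a homogeneous system of parameters of $R$. Let $H\le G$ be a subgroup with $\mathrm{char}(F)\nmid[G\colon H]$ and put $S:=S[V]^H$. Let $\pi\colon R\to S/(\sum_{i=1}^n f_iS)$ be the composition of the inclusion $R\subseteq S$ with the natural projection. Then $\ker(\pi)=F[\mathcal F]_+R$, where $F[\mathcal F]_+$ is the ideal of the polynomial algebra $F[\mathcal F]$ generated by $f_1,\dots,f_n$. Consequently $\pi$ induces an injective map $R/F[\mathcal F]_+R\to S/(\sum_i f_iS)$; so if moreover $R$ is Cohen–Macaulay and $\mathcal G\subseteq R$ is a set of homogeneous elements whose cardinality and multiset of degrees agree with those of a minimal homogeneous generating set of the $F[\mathcal F]$-module $R$, then $\mathcal G$ generates $R$ as an $F[\mathcal F]$-module if and only if $\pi(\mathcal G)$ is $F$-linearly independent in $S/(\sum_i f_iS)$.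
   Context: $S[V]$ denotes the symmetric algebra over $V$ with induced $G$-action; $S[V]^G$, $S[V]^H$ the invariant subrings. A homogeneous system of parameters of $R$ is a set of $\dim R$ homogeneous elements of positive degree, algebraically independent, over whose generated polynomial subalgebra $R$ is a finitely generated module. $R$ is Cohen–Macaulay if it is a free module over this subalgebra. *)

theory Defs
  imports "HOL-Library.Poly_Mapping" "HOL-Library.Multiset" "HOL-Library.Extended_Nat"
          "HOL-Algebra.Coset"
begin

text \<open>S[V] for dim V = d is the set of polynomials in the
  variables x_0,...,x_(d-1), the x_i being a basis of V.\<close>

type_synonym 'k mpoly = "(nat \<Rightarrow>\<^sub>0 nat) \<Rightarrow>\<^sub>0 'k"

definition mconst :: "'k::comm_ring_1 \<Rightarrow> 'k mpoly" where
  "mconst c = Poly_Mapping.single 0 c"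

definition mvar :: "nat \<Rightarrow> 'k::comm_ring_1 mpoly" where
  "mvar i = Poly_Mapping.single (Poly_Mapping.single i 1) 1"

definition polyring :: "nat \<Rightarrow> 'k::comm_ring_1 mpoly set" where
  "polyring d = {p. \<forall>m \<in> Poly_Mapping.keys p. Poly_Mapping.keys m \<subseteq> {..<d}}"

definition subst :: "(nat \<Rightarrow> 'k::comm_ring_1 mpoly) \<Rightarrow> 'k mpoly \<Rightarrow> 'k mpoly" where
  "subst \<sigma> p = (\<Sum>m\<in>Poly_Mapping.keys p. mconst (Poly_Mapping.lookup p m) * (\<Prod>i\<in>Poly_Mapping.keys m. \<sigma> i ^ Poly_Mapping.lookup m i))"

text \<open>Action of a d x d matrix A (acting on V by A e_j = sum_i A i j e_i)
  on S[V], extended as an algebra automorphism.\<close>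
definition act :: "nat \<Rightarrow> (nat \<Rightarrow> nat \<Rightarrow> 'k::comm_ring_1) \<Rightarrow> 'k mpoly \<Rightarrow> 'k mpoly" where
  "act d A p = subst (\<lambda>j. \<Sum>i<d. mconst (A i j) * mvar i) p"

definition invariants :: "nat \<Rightarrow> ('g \<Rightarrow> nat \<Rightarrow> nat \<Rightarrow> 'k::comm_ring_1) \<Rightarrow> 'g set \<Rightarrow> 'k mpoly set" where
  "invariants d rho K = {p \<in> polyring d. \<forall>g\<in>K. act d (rho g) p = p}"

definition is_rep :: "('g, 'b) monoid_scheme \<Rightarrow> nat \<Rightarrow> ('g \<Rightarrow> nat \<Rightarrow> nat \<Rightarrow> 'k::comm_ring_1) \<Rightarrow> bool" where
  "is_rep G d rho \<longleftrightarrow>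
     (\<forall>g\<in>carrier G. \<forall>h\<in>carrier G. \<forall>i<d. \<forall>j<d.
        rho (g \<otimes>\<^bsub>G\<^esub> h) i j = (\<Sum>l<d. rho g i l * rho h l j)) \<and>
     (\<forall>i<d. \<forall>j<d. rho \<one>\<^bsub>G\<^esub> i j = (if i = j then 1 else 0))"

definition mdeg :: "(nat \<Rightarrow>\<^sub>0 nat) \<Rightarrow> nat" where
  "mdeg m = (\<Sum>i\<in>Poly_Mapping.keys m. Poly_Mapping.lookup m i)"

definition homog_of_deg :: "'k::comm_ring_1 mpoly \<Rightarrow> nat \<Rightarrow> bool" where
  "homog_of_deg p e \<longleftrightarrow> (\<forall>m\<in>Poly_Mapping.keys p. mdeg m = e)"

definition is_homog :: "'k::comm_ring_1 mpoly \<Rightarrow> bool" where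
  "is_homog p \<longleftrightarrow> (\<exists>e. homog_of_deg p e)"

definition hdeg :: "'k::comm_ring_1 mpoly \<Rightarrow> nat" where
  "hdeg p = (if p = 0 then 0 else mdeg (SOME m. m \<in> Poly_Mapping.keys p))"

definition alg_closure :: "(nat \<Rightarrow> 'k::comm_ring_1 mpoly) \<Rightarrow> nat \<Rightarrow> 'k mpoly set" where
  "alg_closure f n = {subst f q | q. q \<in> polyring n}"

definition alg_indep :: "(nat \<Rightarrow> 'k::comm_ring_1 mpoly) \<Rightarrow> nat \<Rightarrow> bool" where
  "alg_indep f n \<longleftrightarrow> (\<forall>q\<in>polyring n. subst f q = 0 \<longrightarrow> q = 0)"

definition lin_span :: "'a::comm_ring_1 set \<Rightarrow> 'a set \<Rightarrow> 'a set" where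
  "lin_span A X = {(\<Sum>j<(k::nat). a j * x j) | k a x. \<forall>j<k. a j \<in> A \<and> x j \<in> X}"

definition fin_gen_module :: "'a::comm_ring_1 set \<Rightarrow> 'a set \<Rightarrow> bool" where
  "fin_gen_module A M \<longleftrightarrow> (\<exists>B. finite B \<and> B \<subseteq> M \<and> M = lin_span A B)"

definition free_module :: "'a::comm_ring_1 set \<Rightarrow> 'a set \<Rightarrow> bool" where
  "free_module A M \<longleftrightarrow> (\<exists>B. B \<subseteq> M \<and> M = lin_span A B \<and>
      (\<forall>B' c. finite B' \<and> B' \<subseteq> B \<and> (\<forall>b\<in>B'. c b \<in> A) \<and> (\<Sum>b\<in>B'. c b * b) = 0
              \<longrightarrow> (\<forall>b\<in>B'. c b = 0)))"

definition prime_ideal_in :: "'a::comm_ring_1 set \<Rightarrow> 'a set \<Rightarrow> bool" where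
  "prime_ideal_in R P \<longleftrightarrow> P \<subseteq> R \<and> P \<noteq> R \<and> 0 \<in> P \<and>
     (\<forall>a\<in>P. \<forall>b\<in>P. a + b \<in> P) \<and> (\<forall>r\<in>R. \<forall>a\<in>P. r * a \<in> P) \<and>
     (\<forall>a\<in>R. \<forall>b\<in>R. a * b \<in> P \<longrightarrow> a \<in> P \<or> b \<in> P)"

definition krull_dim :: "'a::comm_ring_1 set \<Rightarrow> enat" where
  "krull_dim R = Sup {enat k | k. \<exists>c :: nat \<Rightarrow> 'a set.
      (\<forall>i\<le>k. prime_ideal_in R (c i)) \<and> (\<forall>i<k. c i \<subset> c (Suc i))}"

definition hsop :: "'k::field mpoly set \<Rightarrow> (nat \<Rightarrow> 'k mpoly) \<Rightarrow> nat \<Rightarrow> bool" where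
  "hsop R f n \<longleftrightarrow> enat n = krull_dim R \<and>
     (\<forall>i<n. f i \<in> R \<and> (\<exists>e>0. homog_of_deg (f i) e)) \<and>
     alg_indep f n \<and> fin_gen_module (alg_closure f n) R"

definition plus_ideal :: "(nat \<Rightarrow> 'k::comm_ring_1 mpoly) \<Rightarrow> nat \<Rightarrow> 'k mpoly set" where
  "plus_ideal f n = {(\<Sum>i<n. f i * a i) | a. \<forall>i<n. a i \<in> alg_closure f n}"

definition gen_ideal :: "(nat \<Rightarrow> 'k::comm_ring_1 mpoly) \<Rightarrow> nat \<Rightarrow> 'k mpoly set \<Rightarrow> 'k mpoly set" where
  "gen_ideal f n S = {(\<Sum>i<n. f i * s i) | s. \<forall>i<n. s i \<in> S}"

definition min_hom_gen_set :: "'k::comm_ring_1 mpoly set \<Rightarrow> 'k mpoly set \<Rightarrow> 'k mpoly set \<Rightarrow> bool" where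
  "min_hom_gen_set A M X \<longleftrightarrow> X \<subseteq> M \<and> (\<forall>x\<in>X. is_homog x) \<and> M = lin_span A X \<and>
     (\<forall>Y. Y \<subset> X \<longrightarrow> M \<noteq> lin_span A Y)"

end

theory Submission
  imports Defs
begin

text \<open>The relative trace \<open>Tr(s) = \<Sum>\<^bsub>Hg \<in> H\G\<^esub> g\<^sup>-\<^sup>1 s\<close> is an \<open>S[V]\<^sup>G\<close>-linear map
  \<open>S[V]\<^sup>H \<rightarrow> S[V]\<^sup>G\<close> which is multiplication by the index \<open>[G:H]\<close> on \<open>S[V]\<^sup>G\<close>. Since the index
  is invertible in \<open>F\<close>, applying \<open>Tr\<close> to \<open>r = \<Sum> f\<^sub>i s\<^sub>i\<close> with \<open>r \<in> R\<close> shows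
  \<open>R \<inter> \<Sum> f\<^sub>i S = \<Sum> f\<^sub>i R = F[\<F>]\<^sub>+ R\<close>.

  By the graded Nakayama lemma, a finite set of homogeneous elements of \<open>R\<close> generates \<open>R\<close> over
  \<open>F[\<F>]\<close> iff it spans \<open>R\<close> modulo \<open>\<Sum> f\<^sub>i R\<close> over \<open>F\<close>. Hence a minimal homogeneous generating
  set is a basis of \<open>R\<close> modulo \<open>\<Sum> f\<^sub>i R\<close>, and a set of the same size generates iff it is
  linearly independent modulo \<open>\<Sum> f\<^sub>i R\<close>, i.e. modulo \<open>\<Sum> f\<^sub>i S\<close>.\<close>

lemma mconst_0 [simp]: "mconst 0 = 0"
  by (simp add: mconst_def)

lemma mconst_1 [simp]: "mconst 1 = 1"
  by (simp add: mconst_def)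

lemma mconst_add: "mconst (a + b) = mconst a + mconst b"
  by (simp add: mconst_def single_add)

lemma mconst_mult: "mconst (a * b) = mconst a * mconst b"
  by (simp add: mconst_def mult_single)

lemma mconst_uminus: "mconst (- a) = - mconst a"
  by (simp add: mconst_def single_uminus)

lemma mconst_sum: "mconst (sum g A) = (\<Sum>x\<in>A. mconst (g x))"
  by (induction A rule: infinite_finite_induct) (auto simp: mconst_add)

lemma of_nat_eq_mconst: "of_nat k = mconst (of_nat k)"
  by (simp add: mconst_def)

lemma lookup_mconst_mult: "Poly_Mapping.lookup (mconst c * p) m = c * Poly_Mapping.lookup p m"
  by (simp add: mconst_def mult_map_scale_conv_mult[symmetric] Poly_Mapping.map.rep_eq when_def)

lemma mpoly_eq_sum_single:
  "p = (\<Sum>m\<in>Poly_Mapping.keys p. Poly_Mapping.single m (Poly_Mapping.lookup p m))"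
  by (rule poly_mapping_eqI) (auto simp: lookup_sum lookup_single when_def in_keys_iff
      sum.delta' split: if_splits)

definition subst_monom :: "(nat \<Rightarrow> 'k::comm_ring_1 mpoly) \<Rightarrow> (nat \<Rightarrow>\<^sub>0 nat) \<Rightarrow> 'k mpoly" where
  "subst_monom \<sigma> m = (\<Prod>i\<in>Poly_Mapping.keys m. \<sigma> i ^ Poly_Mapping.lookup m i)"

lemma subst_monom_eq_prod:
  assumes "finite K" "Poly_Mapping.keys m \<subseteq> K"
  shows "subst_monom \<sigma> m = (\<Prod>i\<in>K. \<sigma> i ^ Poly_Mapping.lookup m i)"
  unfolding subst_monom_def using assms
  by (intro prod.mono_neutral_left) (auto simp: in_keys_iff)

lemma subst_monom_add: "subst_monom \<sigma> (m1 + m2) = subst_monom \<sigma> m1 * subst_monom \<sigma> m2"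
proof -
  let ?K = "Poly_Mapping.keys m1 \<union> Poly_Mapping.keys m2"
  have "subst_monom \<sigma> (m1 + m2) = (\<Prod>i\<in>?K. \<sigma> i ^ Poly_Mapping.lookup (m1 + m2) i)"
    by (rule subst_monom_eq_prod) (auto dest: subsetD[OF keys_add])
  also have "\<dots> = (\<Prod>i\<in>?K. \<sigma> i ^ Poly_Mapping.lookup m1 i * \<sigma> i ^ Poly_Mapping.lookup m2 i)"
    by (simp add: lookup_add power_add)
  also have "\<dots> = subst_monom \<sigma> m1 * subst_monom \<sigma> m2"
    by (simp add: prod.distrib subst_monom_eq_prod[of ?K])
  finally show ?thesis .
qed

lemma subst_monom_single_1: "subst_monom \<sigma> (Poly_Mapping.single i 1) = \<sigma> i"
  by (simp add: subst_monom_def)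

lemma subst_eq_sum:
  assumes "finite K" "Poly_Mapping.keys p \<subseteq> K"
  shows "subst \<sigma> p = (\<Sum>m\<in>K. mconst (Poly_Mapping.lookup p m) * subst_monom \<sigma> m)"
  unfolding subst_def subst_monom_def[symmetric] using assms
  by (intro sum.mono_neutral_left) (auto simp: in_keys_iff)

lemma subst_0 [simp]: "subst \<sigma> 0 = 0"
  by (simp add: subst_def)

lemma subst_add: "subst \<sigma> (p + q) = subst \<sigma> p + subst \<sigma> q"
proof -
  let ?K = "Poly_Mapping.keys p \<union> Poly_Mapping.keys q"
  have "subst \<sigma> (p + q) = (\<Sum>m\<in>?K. mconst (Poly_Mapping.lookup (p + q) m) * subst_monom \<sigma> m)"
    by (rule subst_eq_sum) (auto dest: subsetD[OF keys_add])
  also have "\<dots> = (\<Sum>m\<in>?K. mconst (Poly_Mapping.lookup p m) * subst_monom \<sigma> m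
                    + mconst (Poly_Mapping.lookup q m) * subst_monom \<sigma> m)"
    by (simp add: lookup_add mconst_add algebra_simps)
  also have "\<dots> = subst \<sigma> p + subst \<sigma> q"
    by (simp add: sum.distrib subst_eq_sum[of ?K])
  finally show ?thesis .
qed

lemma subst_sum: "subst \<sigma> (sum g A) = (\<Sum>x\<in>A. subst \<sigma> (g x))"
  by (induction A rule: infinite_finite_induct) (auto simp: subst_add)

lemma subst_single: "subst \<sigma> (Poly_Mapping.single m c) = mconst c * subst_monom \<sigma> m"
  by (subst subst_eq_sum[of "{m}"]) auto

lemma subst_mult: "subst \<sigma> (p * q) = subst \<sigma> p * subst \<sigma> q"
proof -
  let ?P = "Poly_Mapping.keys p" and ?Q = "Poly_Mapping.keys q"
  let ?lp = "Poly_Mapping.lookup p" and ?lq = "Poly_Mapping.lookup q"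
  have "p * q = (\<Sum>m\<in>?P. Poly_Mapping.single m (?lp m)) * (\<Sum>m'\<in>?Q. Poly_Mapping.single m' (?lq m'))"
    by (subst mpoly_eq_sum_single[of p], subst mpoly_eq_sum_single[of q]) (rule refl)
  also have "\<dots> = (\<Sum>m\<in>?P. \<Sum>m'\<in>?Q. Poly_Mapping.single (m + m') (?lp m * ?lq m'))"
    by (simp add: sum_product mult_single)
  finally have "subst \<sigma> (p * q) = (\<Sum>m\<in>?P. \<Sum>m'\<in>?Q.
      mconst (?lp m) * subst_monom \<sigma> m * (mconst (?lq m') * subst_monom \<sigma> m'))"
    by (simp add: subst_sum subst_single subst_monom_add mconst_mult algebra_simps)
  also have "\<dots> = subst \<sigma> p * subst \<sigma> q"
    by (simp add: subst_def subst_monom_def sum_product)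
  finally show ?thesis .
qed

lemma subst_mconst [simp]: "subst \<sigma> (mconst c) = mconst c"
  by (simp add: mconst_def subst_single subst_monom_def)

lemma subst_power: "subst \<sigma> (p ^ k) = subst \<sigma> p ^ k"
  by (induction k) (auto simp: subst_mult simp flip: mconst_1)

lemma subst_prod: "subst \<sigma> (prod g A) = (\<Prod>x\<in>A. subst \<sigma> (g x))"
  by (induction A rule: infinite_finite_induct) (auto simp: subst_mult simp flip: mconst_1)

lemma subst_subst: "subst \<tau> (subst \<sigma> p) = subst (\<lambda>i. subst \<tau> (\<sigma> i)) p"
  unfolding subst_def[of \<sigma> p] subst_def[of "\<lambda>i. subst \<tau> (\<sigma> i)" p]
  by (simp add: subst_sum subst_mult subst_prod subst_power)

lemma subst_cong:
  assumes "\<And>m i. m \<in> Poly_Mapping.keys p \<Longrightarrow> i \<in> Poly_Mapping.keys m \<Longrightarrow> \<sigma> i = \<tau> i"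
  shows "subst \<sigma> p = subst \<tau> p"
  unfolding subst_def using assms by (intro sum.cong refl arg_cong2[where f="(*)"] prod.cong) auto


definition subalg :: "'k::comm_ring_1 mpoly set \<Rightarrow> bool" where
  "subalg T \<longleftrightarrow> (\<forall>c. mconst c \<in> T) \<and> (\<forall>p\<in>T. \<forall>q\<in>T. p + q \<in> T \<and> p * q \<in> T)"

context
  fixes T :: "'k::comm_ring_1 mpoly set"
  assumes T: "subalg T"
begin

lemma subalg_mconst: "mconst c \<in> T"
  using T by (simp add: subalg_def)

lemma subalg_0: "0 \<in> T"
  using subalg_mconst[of 0] by simp

lemma subalg_1: "1 \<in> T"
  using subalg_mconst[of 1] by simp

lemma subalg_add: "p \<in> T \<Longrightarrow> q \<in> T \<Longrightarrow> p + q \<in> T"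
  using T by (simp add: subalg_def)

lemma subalg_mult: "p \<in> T \<Longrightarrow> q \<in> T \<Longrightarrow> p * q \<in> T"
  using T by (simp add: subalg_def)

lemma subalg_uminus: "p \<in> T \<Longrightarrow> - p \<in> T"
  using subalg_mult[OF subalg_mconst[of "-1"]] by (simp add: mconst_uminus)

lemma subalg_diff: "p \<in> T \<Longrightarrow> q \<in> T \<Longrightarrow> p - q \<in> T"
  using subalg_add[of p "- q"] subalg_uminus[of q] by simp

lemma subalg_sum: "(\<And>x. x \<in> B \<Longrightarrow> g x \<in> T) \<Longrightarrow> sum g B \<in> T"
  by (induction B rule: infinite_finite_induct) (auto simp: subalg_0 subalg_add)

lemma subalg_prod: "(\<And>x. x \<in> B \<Longrightarrow> g x \<in> T) \<Longrightarrow> prod g B \<in> T"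
  by (induction B rule: infinite_finite_induct) (auto simp: subalg_1 subalg_mult)

lemma subalg_power: "p \<in> T \<Longrightarrow> p ^ k \<in> T"
  by (induction k) (auto simp: subalg_1 subalg_mult)

lemma subalg_subst:
  assumes "\<And>m i. m \<in> Poly_Mapping.keys p \<Longrightarrow> i \<in> Poly_Mapping.keys m \<Longrightarrow> \<sigma> i \<in> T"
  shows "subst \<sigma> p \<in> T"
  unfolding subst_def using assms
  by (intro subalg_sum subalg_mult subalg_mconst subalg_prod subalg_power) auto

end

lemma keys_add_monom:
  "Poly_Mapping.keys ((a::nat \<Rightarrow>\<^sub>0 nat) + b) = Poly_Mapping.keys a \<union> Poly_Mapping.keys b"
  by (auto simp: in_keys_iff lookup_add)

lemma polyring_varD:
  "p \<in> polyring d \<Longrightarrow> m \<in> Poly_Mapping.keys p \<Longrightarrow> i \<in> Poly_Mapping.keys m \<Longrightarrow> i < d"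
  by (auto simp: polyring_def)

lemma subalg_polyring: "subalg (polyring d)"
  unfolding subalg_def
proof (intro conjI allI ballI)
  fix c :: 'a show "mconst c \<in> polyring d"
    by (simp add: mconst_def polyring_def)
next
  fix p q :: "'a mpoly" assume p: "p \<in> polyring d" and q: "q \<in> polyring d"
  show "p + q \<in> polyring d"
    using p q by (auto simp: polyring_def dest!: subsetD[OF keys_add])
  show "p * q \<in> polyring d"
    unfolding polyring_def
  proof safe
    fix m i assume "m \<in> Poly_Mapping.keys (p * q)" "i \<in> Poly_Mapping.keys m"
    then obtain a b where "m = a + b" "a \<in> Poly_Mapping.keys p" "b \<in> Poly_Mapping.keys q"
      using keys_mult by blast
    with p q \<open>i \<in> Poly_Mapping.keys m\<close> show "i < d"
      by (auto simp: keys_add_monom dest: polyring_varD)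
  qed
qed

lemma mvar_in_polyring: "i < d \<Longrightarrow> mvar i \<in> polyring d"
  by (simp add: mvar_def polyring_def)

lemma subalg_alg_closure: "subalg (alg_closure f n)"
  unfolding subalg_def alg_closure_def
proof (intro conjI allI ballI)
  fix c
  show "mconst c \<in> {subst f q |q. q \<in> polyring n}"
    by (intro CollectI exI[of _ "mconst c"]) (simp add: subalg_mconst[OF subalg_polyring])
next
  fix p q assume "p \<in> {subst f q |q. q \<in> polyring n}" "q \<in> {subst f q |q. q \<in> polyring n}"
  then obtain p' q' where pq: "p = subst f p'" "q = subst f q'" "p' \<in> polyring n" "q' \<in> polyring n"
    by auto
  show "p + q \<in> {subst f q |q. q \<in> polyring n}"
    using pq subalg_add[OF subalg_polyring] by (auto intro!: exI[of _ "p' + q'"] simp: subst_add)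
  show "p * q \<in> {subst f q |q. q \<in> polyring n}"
    using pq subalg_mult[OF subalg_polyring] by (auto intro!: exI[of _ "p' * q'"] simp: subst_mult)
qed

lemma alg_closure_subset:
  assumes "subalg T" "\<And>i. i < n \<Longrightarrow> f i \<in> T"
  shows "alg_closure f n \<subseteq> T"
  unfolding alg_closure_def
  using assms by (auto intro!: subalg_subst dest: polyring_varD)

lemma in_alg_closure: "i < n \<Longrightarrow> f i \<in> alg_closure f n"
  unfolding alg_closure_def by (auto intro!: exI[of _ "mvar i"] mvar_in_polyring simp: mvar_def subst_single subst_monom_def)


section \<open>The linear action and invariants\<close>

definition lin_form :: "nat \<Rightarrow> (nat \<Rightarrow> nat \<Rightarrow> 'k::comm_ring_1) \<Rightarrow> nat \<Rightarrow> 'k mpoly" where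
  "lin_form d A j = (\<Sum>i<d. mconst (A i j) * mvar i)"

lemma act_eq_subst_lin_form: "act d A p = subst (lin_form d A) p"
  by (simp add: act_def lin_form_def[abs_def])

lemma lin_form_in_polyring: "lin_form d A j \<in> polyring d"
  unfolding lin_form_def
  by (intro subalg_sum subalg_mult subalg_mconst subalg_polyring mvar_in_polyring) auto

lemma act_in_polyring: "act d A p \<in> polyring d"
  unfolding act_eq_subst_lin_form by (intro subalg_subst subalg_polyring lin_form_in_polyring)

lemma act_add: "act d A (p + q) = act d A p + act d A q"
  by (simp add: act_eq_subst_lin_form subst_add)

lemma act_mult: "act d A (p * q) = act d A p * act d A q"
  by (simp add: act_eq_subst_lin_form subst_mult)

lemma act_sum: "act d A (sum g B) = (\<Sum>x\<in>B. act d A (g x))"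
  by (simp add: act_eq_subst_lin_form subst_sum)

lemma act_mconst [simp]: "act d A (mconst c) = mconst c"
  by (simp add: act_eq_subst_lin_form)

lemma act_cong:
  assumes "p \<in> polyring d" "\<And>i j. i < d \<Longrightarrow> j < d \<Longrightarrow> A i j = B i j"
  shows "act d A p = act d B p"
  unfolding act_eq_subst_lin_form
  using assms by (intro subst_cong) (auto simp: lin_form_def dest: polyring_varD)

lemma act_act:
  assumes "p \<in> polyring d"
  shows "act d A (act d B p) = act d (\<lambda>i j. \<Sum>l<d. A i l * B l j) p"
proof -
  have "subst (lin_form d A) (lin_form d B j) = lin_form d (\<lambda>i j. \<Sum>l<d. A i l * B l j) j" for j
  proof -
    have "subst (lin_form d A) (lin_form d B j) = (\<Sum>l<d. \<Sum>i<d. mconst (A i l * B l j) * mvar i)"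
      by (simp add: lin_form_def subst_sum subst_mult mvar_def subst_single subst_monom_def
          sum_distrib_left mconst_mult algebra_simps)
    also have "\<dots> = lin_form d (\<lambda>i j. \<Sum>l<d. A i l * B l j) j"
      by (subst sum.swap) (simp add: lin_form_def mconst_sum sum_distrib_right)
    finally show ?thesis .
  qed
  then show ?thesis
    by (simp add: act_eq_subst_lin_form subst_subst)
qed

lemma subalg_invariants: "subalg (invariants d rho K)"
  unfolding subalg_def invariants_def
  by (auto simp: subalg_mconst[OF subalg_polyring] subalg_add[OF subalg_polyring]
      subalg_mult[OF subalg_polyring] act_add act_mult)

lemma invariants_antimono: "K \<subseteq> L \<Longrightarrow> invariants d rho L \<subseteq> invariants d rho K"
  by (auto simp: invariants_def)


section \<open>Homogeneous components\<close>

lemma mdeg_eq_sum: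
  assumes "finite K" "Poly_Mapping.keys m \<subseteq> K"
  shows "mdeg m = (\<Sum>i\<in>K. Poly_Mapping.lookup m i)"
  unfolding mdeg_def using assms
  by (intro sum.mono_neutral_left) (auto simp: in_keys_iff)

lemma mdeg_add: "mdeg (m1 + m2) = mdeg m1 + mdeg m2"
proof -
  let ?K = "Poly_Mapping.keys m1 \<union> Poly_Mapping.keys m2"
  have "mdeg (m1 + m2) = (\<Sum>i\<in>?K. Poly_Mapping.lookup (m1 + m2) i)"
    by (rule mdeg_eq_sum) (auto simp: keys_add_monom)
  also have "\<dots> = mdeg m1 + mdeg m2"
    by (simp add: lookup_add sum.distrib mdeg_eq_sum[of ?K])
  finally show ?thesis .
qed

lemma mdeg_0 [simp]: "mdeg 0 = 0"
  by (simp add: mdeg_def)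

lemma mdeg_single [simp]: "mdeg (Poly_Mapping.single i k) = k"
  by (simp add: mdeg_def)

definition hcomp :: "nat \<Rightarrow> 'k::comm_ring_1 mpoly \<Rightarrow> 'k mpoly" where
  "hcomp e p = (\<Sum>m\<in>{m \<in> Poly_Mapping.keys p. mdeg m = e}. Poly_Mapping.single m (Poly_Mapping.lookup p m))"

lemma lookup_hcomp:
  "Poly_Mapping.lookup (hcomp e p) m = (if mdeg m = e then Poly_Mapping.lookup p m else 0)"
proof -
  have "Poly_Mapping.lookup (hcomp e p) m =
    (\<Sum>m'\<in>{m \<in> Poly_Mapping.keys p. mdeg m = e}. if m' = m then Poly_Mapping.lookup p m' else 0)"
    unfolding hcomp_def lookup_sum by (intro sum.cong refl) (simp add: lookup_single when_def)
  then show ?thesis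
    by (simp add: sum.delta' in_keys_iff)
qed

lemma keys_hcomp: "Poly_Mapping.keys (hcomp e p) \<subseteq> Poly_Mapping.keys p"
  by (auto simp: in_keys_iff lookup_hcomp split: if_splits)

lemma hcomp_0 [simp]: "hcomp e 0 = 0"
  by (simp add: hcomp_def)

lemma hcomp_add: "hcomp e (p + q) = hcomp e p + hcomp e q"
  by (rule poly_mapping_eqI) (simp add: lookup_hcomp lookup_add)

lemma hcomp_sum: "hcomp e (sum g B) = (\<Sum>x\<in>B. hcomp e (g x))"
  by (induction B rule: infinite_finite_induct) (auto simp: hcomp_add)

lemma hcomp_mconst_mult: "hcomp e (mconst c * p) = mconst c * hcomp e p"
  by (rule poly_mapping_eqI) (simp add: lookup_hcomp lookup_mconst_mult)

lemma homog_hcomp: "homog_of_deg (hcomp e p) e"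
  unfolding homog_of_deg_def by (auto simp: in_keys_iff lookup_hcomp split: if_splits)

lemma hcomp_homog: "homog_of_deg p a \<Longrightarrow> hcomp e p = (if e = a then p else 0)"
  unfolding homog_of_deg_def
  by (rule poly_mapping_eqI) (auto simp: lookup_hcomp in_keys_iff)

lemma sum_hcomp: "(\<Sum>e\<in>mdeg ` Poly_Mapping.keys p. hcomp e p) = p"
proof (rule poly_mapping_eqI)
  fix m
  have "Poly_Mapping.lookup (\<Sum>e\<in>mdeg ` Poly_Mapping.keys p. hcomp e p) m =
        (\<Sum>e\<in>mdeg ` Poly_Mapping.keys p. if e = mdeg m then Poly_Mapping.lookup p m else 0)"
    by (simp add: lookup_sum lookup_hcomp eq_commute)
  also have "\<dots> = Poly_Mapping.lookup p m"
    by (auto simp: sum.delta' in_keys_iff)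
  finally show "Poly_Mapping.lookup (\<Sum>e\<in>mdeg ` Poly_Mapping.keys p. hcomp e p) m = Poly_Mapping.lookup p m" .
qed

lemma homog_0 [simp]: "homog_of_deg 0 e"
  by (simp add: homog_of_deg_def)

lemma homog_add: "homog_of_deg p e \<Longrightarrow> homog_of_deg q e \<Longrightarrow> homog_of_deg (p + q) e"
  unfolding homog_of_deg_def by (auto dest!: subsetD[OF keys_add])

lemma homog_sum: "(\<And>x. x \<in> B \<Longrightarrow> homog_of_deg (g x) e) \<Longrightarrow> homog_of_deg (sum g B) e"
  by (induction B rule: infinite_finite_induct) (auto intro: homog_add)

lemma homog_mult: "homog_of_deg p a \<Longrightarrow> homog_of_deg q b \<Longrightarrow> homog_of_deg (p * q) (a + b)"
  unfolding homog_of_deg_def by (auto dest!: subsetD[OF keys_mult] simp: mdeg_add)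

lemma homog_1: "homog_of_deg 1 0"
  by (simp add: homog_of_deg_def)

lemma homog_mconst_mult: "homog_of_deg p a \<Longrightarrow> homog_of_deg (mconst c * p) a"
  using homog_mult[of "mconst c" 0 p a] by (simp add: homog_of_deg_def mconst_def)

lemma homog_power: "homog_of_deg p a \<Longrightarrow> homog_of_deg (p ^ k) (k * a)"
  by (induction k) (auto simp: homog_1 dest: homog_mult)

lemma homog_prod:
  "(\<And>x. x \<in> B \<Longrightarrow> homog_of_deg (g x) (dg x)) \<Longrightarrow> homog_of_deg (prod g B) (sum dg B)"
  by (induction B rule: infinite_finite_induct) (auto simp: homog_1 dest: homog_mult)

lemma homog_single: "homog_of_deg (Poly_Mapping.single m c) (mdeg m)"
  by (simp add: homog_of_deg_def)

lemma homog_lin_form: "homog_of_deg (lin_form d A j) 1"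
  unfolding lin_form_def mvar_def
  by (intro homog_sum homog_mconst_mult) (simp add: homog_of_deg_def)

lemma homog_act_single: "homog_of_deg (act d A (Poly_Mapping.single m c)) (mdeg m)"
proof -
  have "homog_of_deg (subst_monom (lin_form d A) m) (\<Sum>i\<in>Poly_Mapping.keys m. Poly_Mapping.lookup m i * 1)"
    unfolding subst_monom_def by (intro homog_prod homog_power homog_lin_form)
  then show ?thesis
    by (simp add: act_eq_subst_lin_form subst_single mdeg_def homog_mconst_mult)
qed

lemma act_hcomp: "act d A (hcomp e p) = hcomp e (act d A p)"
proof -
  let ?s = "\<lambda>m. Poly_Mapping.single m (Poly_Mapping.lookup p m)"
  have "act d A (hcomp e p) = (\<Sum>m\<in>{m \<in> Poly_Mapping.keys p. mdeg m = e}. act d A (?s m))"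
    by (simp add: hcomp_def act_sum)
  also have "\<dots> = (\<Sum>m\<in>Poly_Mapping.keys p. if mdeg m = e then act d A (?s m) else 0)"
    by (simp add: sum.inter_filter)
  also have "\<dots> = (\<Sum>m\<in>Poly_Mapping.keys p. hcomp e (act d A (?s m)))"
    by (intro sum.cong refl) (simp add: hcomp_homog[OF homog_act_single] eq_commute)
  also have "\<dots> = hcomp e (act d A p)"
    by (subst (2) mpoly_eq_sum_single[of p]) (simp add: act_sum hcomp_sum)
  finally show ?thesis .
qed

lemma hcomp_in_invariants: "p \<in> invariants d rho K \<Longrightarrow> hcomp e p \<in> invariants d rho K"
  unfolding invariants_def polyring_def using keys_hcomp[of e p] by (auto simp: act_hcomp)

lemma hcomp_homog_mult:
  assumes "homog_of_deg p a"
  shows "hcomp e (p * q) = (if a \<le> e then p * hcomp (e - a) q else 0)"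
proof -
  let ?s = "\<lambda>m. Poly_Mapping.single m (Poly_Mapping.lookup q m)"
  have "hcomp e (p * q) = (\<Sum>m\<in>Poly_Mapping.keys q. if e = a + mdeg m then p * ?s m else 0)"
    by (subst mpoly_eq_sum_single[of q])
      (simp add: sum_distrib_left hcomp_sum hcomp_homog[OF homog_mult[OF assms homog_single]])
  also have "\<dots> = (if a \<le> e then p * hcomp (e - a) q else 0)"
    by (subst (2) mpoly_eq_sum_single[of q])
      (auto simp: sum_distrib_left hcomp_sum hcomp_homog[OF homog_single] intro!: sum.cong)
  finally show ?thesis .
qed


context
  fixes T :: "'k::comm_ring_1 mpoly set"
  assumes T: "subalg T"
begin

lemma gen_ideal_0: "0 \<in> gen_ideal f n T"
  unfolding gen_ideal_def using subalg_0[OF T] by (intro CollectI exI[of _ "\<lambda>_. 0"]) auto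

lemma gen_ideal_add:
  assumes "p \<in> gen_ideal f n T" "q \<in> gen_ideal f n T"
  shows "p + q \<in> gen_ideal f n T"
proof -
  obtain a b where "p = (\<Sum>i<n. f i * a i)" "q = (\<Sum>i<n. f i * b i)" "\<forall>i<n. a i \<in> T \<and> b i \<in> T"
    using assms unfolding gen_ideal_def by blast
  then show ?thesis
    unfolding gen_ideal_def using subalg_add[OF T]
    by (intro CollectI exI[of _ "\<lambda>i. a i + b i"]) (auto simp: sum.distrib distrib_left)
qed

lemma gen_ideal_sum: "(\<And>x. x \<in> B \<Longrightarrow> g x \<in> gen_ideal f n T) \<Longrightarrow> sum g B \<in> gen_ideal f n T"
  by (induction B rule: infinite_finite_induct) (auto simp: gen_ideal_0 gen_ideal_add)

lemma gen_ideal_mult: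
  assumes "t \<in> T" "p \<in> gen_ideal f n T"
  shows "t * p \<in> gen_ideal f n T"
proof -
  obtain a where "p = (\<Sum>i<n. f i * a i)" "\<forall>i<n. a i \<in> T"
    using assms(2) unfolding gen_ideal_def by blast
  then show ?thesis
    unfolding gen_ideal_def using subalg_mult[OF T assms(1)]
    by (intro CollectI exI[of _ "\<lambda>i. t * a i"]) (auto simp: sum_distrib_left mult.left_commute)
qed

lemma mult_in_gen_ideal: "i < n \<Longrightarrow> t \<in> T \<Longrightarrow> f i * t \<in> gen_ideal f n T"
  unfolding gen_ideal_def using subalg_0[OF T]
  by (intro CollectI exI[of _ "\<lambda>l. if l = i then t else 0"]) (auto simp: if_distrib cong: if_cong)

lemma gen_ideal_subset: "(\<And>i. i < n \<Longrightarrow> f i \<in> T) \<Longrightarrow> gen_ideal f n T \<subseteq> T"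
  unfolding gen_ideal_def by (auto intro!: subalg_sum[OF T] subalg_mult[OF T])

end

lemma gen_ideal_mono: "T \<subseteq> T' \<Longrightarrow> gen_ideal f n T \<subseteq> gen_ideal f n T'"
  unfolding gen_ideal_def by blast

lemma plus_ideal_eq_gen_ideal: "plus_ideal f n = gen_ideal f n (alg_closure f n)"
  unfolding plus_ideal_def gen_ideal_def by (simp add: mult.commute)

lemma lin_span_plus_ideal:
  assumes R: "subalg R" and f: "\<And>i. i < n \<Longrightarrow> f i \<in> R"
  shows "lin_span (plus_ideal f n) R = gen_ideal f n R"
proof
  have "plus_ideal f n \<subseteq> gen_ideal f n R"
    unfolding plus_ideal_eq_gen_ideal by (rule gen_ideal_mono[OF alg_closure_subset[OF R f]])
  then have "x * a \<in> gen_ideal f n R" if "a \<in> plus_ideal f n" "x \<in> R" for a x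
    using that by (blast intro: gen_ideal_mult[OF R])
  then show "lin_span (plus_ideal f n) R \<subseteq> gen_ideal f n R"
    unfolding lin_span_def by (auto intro!: gen_ideal_sum[OF R] simp: mult.commute)
next
  have "f i \<in> plus_ideal f n" if "i < n" for i
    using mult_in_gen_ideal[OF subalg_alg_closure that subalg_1[OF subalg_alg_closure]]
    by (simp add: plus_ideal_eq_gen_ideal)
  then show "gen_ideal f n R \<subseteq> lin_span (plus_ideal f n) R"
    unfolding gen_ideal_def lin_span_def by blast
qed

lemma subst_monom_in_plus_ideal:
  assumes "m \<noteq> 0" "Poly_Mapping.keys m \<subseteq> {..<n}"
  shows "subst_monom f m \<in> plus_ideal f n"
proof -
  obtain i where i: "i \<in> Poly_Mapping.keys m"
    using assms(1) by (metis keys_eq_empty ex_in_conv)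
  define m' where "m' = m - Poly_Mapping.single i 1"
  have "m = Poly_Mapping.single i 1 + m'"
    unfolding m'_def using i
    by (intro poly_mapping_eqI) (auto simp: lookup_add lookup_minus lookup_single when_def in_keys_iff)
  then have "subst_monom f m = f i * subst_monom f m'"
    by (simp only: subst_monom_add subst_monom_single_1)
  moreover have "Poly_Mapping.keys m' \<subseteq> Poly_Mapping.keys m"
    unfolding m'_def by (auto simp: in_keys_iff lookup_minus)
  with assms(2) have "Poly_Mapping.keys m' \<subseteq> {..<n}"
    by blast
  then have "subst_monom f m' \<in> alg_closure f n"
    unfolding alg_closure_def polyring_def
    by (intro CollectI exI[of _ "Poly_Mapping.single m' 1"]) (simp add: subst_single)
  ultimately show ?thesis
    using i assms(2) by (auto simp: plus_ideal_eq_gen_ideal intro: mult_in_gen_ideal[OF subalg_alg_closure])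
qed

lemma alg_closure_decomp:
  assumes "a \<in> alg_closure f n"
  obtains c where "a - mconst c \<in> plus_ideal f n"
proof -
  obtain q where a: "a = subst f q" and q: "q \<in> polyring n"
    using assms unfolding alg_closure_def by blast
  let ?K = "Poly_Mapping.keys q - {0}"
  have "a = (\<Sum>m\<in>insert 0 ?K. mconst (Poly_Mapping.lookup q m) * subst_monom f m)"
    unfolding a by (rule subst_eq_sum) auto
  also have "\<dots> = mconst (Poly_Mapping.lookup q 0) * subst_monom f 0
      + (\<Sum>m\<in>?K. mconst (Poly_Mapping.lookup q m) * subst_monom f m)"
    by (rule sum.insert) auto
  finally have "a = \<dots>" .
  moreover have "(\<Sum>m\<in>?K. mconst (Poly_Mapping.lookup q m) * subst_monom f m) \<in> plus_ideal f n"
    unfolding plus_ideal_eq_gen_ideal using q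
    by (intro gen_ideal_sum[OF subalg_alg_closure] gen_ideal_mult[OF subalg_alg_closure]
        subalg_mconst[OF subalg_alg_closure] subst_monom_in_plus_ideal[unfolded plus_ideal_eq_gen_ideal])
      (auto simp: polyring_def)
  ultimately show ?thesis
    by (intro that[of "Poly_Mapping.lookup q 0"]) (simp add: subst_monom_def)
qed


definition span_over :: "'a::comm_ring_1 set \<Rightarrow> 'a set \<Rightarrow> 'a set" where
  "span_over A X = {(\<Sum>x\<in>T. a x * x) | T a. finite T \<and> T \<subseteq> X \<and> (\<forall>x\<in>T. a x \<in> A)}"

context
  fixes A :: "'k::comm_ring_1 mpoly set"
  assumes A: "subalg A"
begin

lemma span_over_0: "0 \<in> span_over A X"
  unfolding span_over_def by (auto intro!: exI[of _ "{}"])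

lemma span_over_add:
  assumes "y1 \<in> span_over A X" "y2 \<in> span_over A X"
  shows "y1 + y2 \<in> span_over A X"
proof -
  obtain T1 a1 where 1: "y1 = (\<Sum>x\<in>T1. a1 x * x)" "finite T1" "T1 \<subseteq> X" "\<forall>x\<in>T1. a1 x \<in> A"
    using assms(1) unfolding span_over_def by blast
  obtain T2 a2 where 2: "y2 = (\<Sum>x\<in>T2. a2 x * x)" "finite T2" "T2 \<subseteq> X" "\<forall>x\<in>T2. a2 x \<in> A"
    using assms(2) unfolding span_over_def by blast
  define a where "a x = (if x \<in> T1 then a1 x else 0) + (if x \<in> T2 then a2 x else 0)" for x
  have "(\<Sum>x\<in>T1 \<union> T2. a x * x) = (\<Sum>x\<in>T1 \<union> T2. if x \<in> T1 then a1 x * x else 0)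
        + (\<Sum>x\<in>T1 \<union> T2. if x \<in> T2 then a2 x * x else 0)"
    by (simp add: a_def distrib_right sum.distrib if_distrib[of "\<lambda>c. c * _"] cong: if_cong)
  also have "\<dots> = y1 + y2"
    using 1 2 by (simp add: sum.If_cases Int_absorb1 Int_absorb2 Int_commute)
  finally have "y1 + y2 = (\<Sum>x\<in>T1 \<union> T2. a x * x)" by simp
  moreover have "\<forall>x\<in>T1 \<union> T2. a x \<in> A"
    using 1 2 subalg_0[OF A] subalg_add[OF A] by (auto simp: a_def)
  ultimately show ?thesis
    using 1 2 unfolding span_over_def by (intro CollectI exI[of _ "T1 \<union> T2"] exI[of _ a]) auto
qed

lemma span_over_single: "a \<in> A \<Longrightarrow> x \<in> X \<Longrightarrow> a * x \<in> span_over A X"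
  unfolding span_over_def by (auto intro!: exI[of _ "{x}"] exI[of _ "\<lambda>_. a"])

lemma span_over_sum: "(\<And>i. i \<in> B \<Longrightarrow> g i \<in> span_over A X) \<Longrightarrow> sum g B \<in> span_over A X"
  by (induction B rule: infinite_finite_induct) (auto simp: span_over_0 span_over_add)

lemma lin_span_eq_span_over: "lin_span A X = span_over A X"
proof
  show "lin_span A X \<subseteq> span_over A X"
  proof
    fix y assume "y \<in> lin_span A X"
    then obtain k a x where y: "y = (\<Sum>j<(k::nat). a j * x j)" "\<forall>j<k. a j \<in> A \<and> x j \<in> X"
      unfolding lin_span_def by blast
    show "y \<in> span_over A X"
      unfolding y(1) using y(2)
      by (intro span_over_sum span_over_single) auto
  qed
next
  show "span_over A X \<subseteq> lin_span A X"
  proof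
    fix y assume "y \<in> span_over A X"
    then obtain T a where T: "y = (\<Sum>x\<in>T. a x * x)" "finite T" "T \<subseteq> X" "\<forall>x\<in>T. a x \<in> A"
      unfolding span_over_def by blast
    obtain h where h: "bij_betw h {..<card T} T"
      using T(2) ex_bij_betw_nat_finite lessThan_atLeast0 by metis
    have "y = (\<Sum>j<card T. a (h j) * h j)"
      unfolding T(1) by (rule sum.reindex_bij_betw[OF h, symmetric])
    moreover have "\<forall>j<card T. a (h j) \<in> A \<and> h j \<in> X"
      using h T bij_betwE by fastforce
    ultimately show "y \<in> lin_span A X"
      unfolding lin_span_def
      by (intro CollectI exI[of _ "card T"] exI[of _ "\<lambda>j. a (h j)"] exI[of _ h]) simp
  qed
qed

lemma span_over_mult:
  assumes "b \<in> A" "y \<in> span_over A X"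
  shows "b * y \<in> span_over A X"
proof -
  obtain T a where T: "y = (\<Sum>x\<in>T. a x * x)" "finite T" "T \<subseteq> X" "\<forall>x\<in>T. a x \<in> A"
    using assms(2) unfolding span_over_def by blast
  then show ?thesis
    using subalg_mult[OF A assms(1)] unfolding span_over_def
    by (intro CollectI exI[of _ T] exI[of _ "\<lambda>x. b * a x"]) (auto simp: sum_distrib_left mult.assoc)
qed

end

lemma span_over_subset:
  assumes "subalg T" "A \<subseteq> T" "X \<subseteq> T"
  shows "span_over A X \<subseteq> T"
  unfolding span_over_def using assms by (auto intro!: subalg_sum subalg_mult)

lemma lin_span_alg_closure: "lin_span (alg_closure f n) X = span_over (alg_closure f n) X"
  by (rule lin_span_eq_span_over[OF subalg_alg_closure])


section \<open>The relative trace\<close>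

lemma gen_ideal_contraction:
  fixes T :: "'k::field mpoly \<Rightarrow> 'k mpoly"
  assumes R: "subalg R" and "R \<subseteq> S" and f: "\<And>i. i < n \<Longrightarrow> f i \<in> R"
    and T_S: "\<And>s. s \<in> S \<Longrightarrow> T s \<in> R"
    and T_add: "\<And>p q. T (p + q) = T p + T q"
    and T_mult: "\<And>r p. r \<in> R \<Longrightarrow> T (r * p) = r * T p"
    and T_R: "\<And>r. r \<in> R \<Longrightarrow> T r = mconst c * r" and "c \<noteq> 0"
  shows "R \<inter> gen_ideal f n S = gen_ideal f n R"
proof
  show "gen_ideal f n R \<subseteq> R \<inter> gen_ideal f n S"
    using gen_ideal_subset[OF R, where f=f and n=n] f gen_ideal_mono[OF \<open>R \<subseteq> S\<close>] by blast
next
  have T_sum: "T (sum g B) = (\<Sum>x\<in>B. T (g x))" for g :: "nat \<Rightarrow> 'k mpoly" and B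
  proof -
    have "T 0 = 0" using T_add[of 0 0] by (metis add.right_neutral add_cancel_right_right)
    then show ?thesis by (induction B rule: infinite_finite_induct) (auto simp: T_add)
  qed
  show "R \<inter> gen_ideal f n S \<subseteq> gen_ideal f n R"
  proof
    fix r assume "r \<in> R \<inter> gen_ideal f n S"
    then obtain s where r: "r \<in> R" "r = (\<Sum>i<n. f i * s i)" and s: "\<forall>i<n. s i \<in> S"
      unfolding gen_ideal_def by blast
    have "r = mconst (inverse c) * T r"
      using T_R[OF r(1)] \<open>c \<noteq> 0\<close> by (simp flip: mult.assoc mconst_mult)
    also have "T r = (\<Sum>i<n. f i * T (s i))"
      unfolding r(2) T_sum using f by (simp add: T_mult)
    finally have "r = (\<Sum>i<n. f i * (mconst (inverse c) * T (s i)))"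
      by (simp add: sum_distrib_left mult.left_commute)
    moreover have "\<forall>i<n. mconst (inverse c) * T (s i) \<in> R"
      using s T_S by (simp add: subalg_mult[OF R] subalg_mconst[OF R])
    ultimately show "r \<in> gen_ideal f n R"
      unfolding gen_ideal_def by (intro CollectI exI[of _ "\<lambda>i. mconst (inverse c) * T (s i)"]) simp
  qed
qed

locale subgroup_rep = group G for G :: "('g, 'b) monoid_scheme" (structure) +
  fixes H :: "'g set" and d :: nat and rho :: "'g \<Rightarrow> nat \<Rightarrow> nat \<Rightarrow> 'k::comm_ring_1"
  assumes rep: "is_rep G d rho" and subgroup_H: "subgroup H G"
begin

lemma act_mult_group:
  assumes "g \<in> carrier G" "h \<in> carrier G" "p \<in> polyring d"
  shows "act d (rho (g \<otimes> h)) p = act d (rho g) (act d (rho h) p)"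
  unfolding act_act[OF assms(3)]
  using rep assms by (intro act_cong) (auto simp: is_rep_def)

lemma rcosets_carrier: "C \<in> rcosets H \<Longrightarrow> C \<subseteq> carrier G"
  using subgroup.rcosets_carrier[OF subgroup_H is_group] .

lemma act_inv_rcos_eq:
  assumes "C \<in> rcosets H" "y \<in> C" "z \<in> C" "s \<in> invariants d rho H"
  shows "act d (rho (inv y)) s = act d (rho (inv z)) s"
proof -
  obtain a where a: "a \<in> carrier G" "C = H #> a"
    using assms(1) by (auto simp: RCOSETS_def)
  have "act d (rho (inv x)) s = act d (rho (inv a)) s" if x: "x \<in> H #> a" for x
  proof -
    obtain h where h: "h \<in> H" "x = h \<otimes> a"
      using x unfolding r_coset_def by blast
    then have hG: "h \<in> carrier G" "inv h \<in> H"
      using subgroup_H by (auto simp: subgroup.mem_carrier subgroup.m_inv_closed)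
    then have "act d (rho (inv x)) s = act d (rho (inv a)) (act d (rho (inv h)) s)"
      using h a assms(4) by (simp add: inv_mult_group act_mult_group invariants_def)
    also have "\<dots> = act d (rho (inv a)) s"
      using hG assms(4) by (simp add: invariants_def)
    finally show ?thesis .
  qed
  then show ?thesis
    using assms(2,3) a by simp
qed

definition rcos_rep :: "'g set \<Rightarrow> 'g" where
  "rcos_rep C = (SOME y. y \<in> C)"

lemma rcos_rep_in:
  assumes "C \<in> rcosets H"
  shows "rcos_rep C \<in> C" "rcos_rep C \<in> carrier G"
proof -
  obtain a where "a \<in> carrier G" "C = H #> a"
    using assms by (auto simp: RCOSETS_def)
  then have "a \<in> C"
    using subgroup_H by (simp add: rcos_self)
  then show "rcos_rep C \<in> C"
    unfolding rcos_rep_def by (rule someI)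
  then show "rcos_rep C \<in> carrier G"
    using rcosets_carrier[OF assms] by blast
qed

lemma bij_betw_rcosets_mult:
  assumes "x \<in> carrier G"
  shows "bij_betw (\<lambda>C. C #> x) (rcosets H) (rcosets H)"
proof (rule bij_betwI[where g="\<lambda>C. C #> inv x"])
  have H: "H \<subseteq> carrier G"
    using subgroup_H by (rule subgroup.subset)
  have "C #> y \<in> rcosets H" if "C \<in> rcosets H" "y \<in> carrier G" for C y
    using that H by (auto simp: RCOSETS_def coset_mult_assoc)
  then show "(\<lambda>C. C #> x) \<in> rcosets H \<rightarrow> rcosets H" "(\<lambda>C. C #> inv x) \<in> rcosets H \<rightarrow> rcosets H"
    using assms by auto
  show "C #> x #> inv x = C" "C #> inv x #> x = C" if "C \<in> rcosets H" for C
    using rcosets_carrier[OF that] assms by (simp_all add: coset_mult_assoc)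
qed

text \<open>By \<open>act_inv_rcos_eq\<close>, the summand \<open>g\<^sup>-\<^sup>1 s\<close> does not depend on which representative
  \<open>g\<close> of the coset \<open>Hg\<close> is chosen.\<close>

definition rel_trace :: "'k mpoly \<Rightarrow> 'k mpoly" where
  "rel_trace s = (\<Sum>C\<in>rcosets H. act d (rho (inv (rcos_rep C))) s)"

lemma rel_trace_in_invariants:
  assumes s: "s \<in> invariants d rho H"
  shows "rel_trace s \<in> invariants d rho (carrier G)"
proof -
  have "act d (rho g) (rel_trace s) = rel_trace s" if g: "g \<in> carrier G" for g
  proof -
    have "act d (rho g) (rel_trace s) = (\<Sum>C\<in>rcosets H. act d (rho (g \<otimes> inv (rcos_rep C))) s)"
      unfolding rel_trace_def act_sum using g rcos_rep_in s act_in_polyring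
      by (intro sum.cong refl) (simp add: act_mult_group invariants_def)
    also have "\<dots> = (\<Sum>C\<in>rcosets H. act d (rho (inv (rcos_rep (C #> inv g)))) s)"
    proof (rule sum.cong[OF refl])
      fix C assume C: "C \<in> rcosets H"
      have "g \<otimes> inv (rcos_rep C) = inv (rcos_rep C \<otimes> inv g)"
        using g rcos_rep_in[OF C] by (simp add: inv_mult_group)
      moreover have "rcos_rep C \<otimes> inv g \<in> C #> inv g"
        using rcos_rep_in[OF C] g unfolding r_coset_def by auto
      moreover have "C #> inv g \<in> rcosets H"
        using bij_betw_rcosets_mult[of "inv g"] g C bij_betwE by fastforce
      ultimately show "act d (rho (g \<otimes> inv (rcos_rep C))) s = act d (rho (inv (rcos_rep (C #> inv g)))) s"
        using act_inv_rcos_eq rcos_rep_in s by metis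
    qed
    also have "\<dots> = rel_trace s"
      unfolding rel_trace_def using bij_betw_rcosets_mult[of "inv g"] g
      by (intro sum.reindex_bij_betw) simp
    finally show ?thesis .
  qed
  moreover have "rel_trace s \<in> polyring d"
    unfolding rel_trace_def by (intro subalg_sum[OF subalg_polyring] act_in_polyring)
  ultimately show ?thesis
    by (simp add: invariants_def)
qed

lemma rel_trace_invariant:
  "r \<in> invariants d rho (carrier G) \<Longrightarrow> rel_trace r = of_nat (card (rcosets H)) * r"
  unfolding rel_trace_def using rcos_rep_in by (simp add: invariants_def)

lemma rel_trace_add: "rel_trace (p + q) = rel_trace p + rel_trace q"
  by (simp add: rel_trace_def act_add sum.distrib)

lemma rel_trace_mult_invariant:
  "r \<in> invariants d rho (carrier G) \<Longrightarrow> rel_trace (r * p) = r * rel_trace p"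
  unfolding rel_trace_def using rcos_rep_in
  by (simp add: act_mult sum_distrib_left invariants_def)

end

lemma invariants_inter_gen_ideal:
  fixes rho :: "'g \<Rightarrow> nat \<Rightarrow> nat \<Rightarrow> 'k::field"
  assumes "group G" "is_rep G d rho" "subgroup H G"
    and index: "\<not> CHAR('k) dvd card (rcosets\<^bsub>G\<^esub> H)"
    and f: "\<And>i. i < n \<Longrightarrow> f i \<in> invariants d rho (carrier G)"
  shows "invariants d rho (carrier G) \<inter> gen_ideal f n (invariants d rho H)
    = gen_ideal f n (invariants d rho (carrier G))"
proof -
  interpret subgroup_rep G H d rho
    using assms by (simp add: subgroup_rep_def subgroup_rep_axioms_def)
  show ?thesis
  proof (rule gen_ideal_contraction[OF subalg_invariants _ f,
        where T = rel_trace and c = "of_nat (card (rcosets\<^bsub>G\<^esub> H))"])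
    show "invariants d rho (carrier G) \<subseteq> invariants d rho H"
      using subgroup.subset[OF \<open>subgroup H G\<close>] by (rule invariants_antimono)
    show "(of_nat (card (rcosets\<^bsub>G\<^esub> H)) :: 'k) \<noteq> 0"
      using index by (simp add: of_nat_eq_0_iff_char_dvd)
  qed (auto simp: rel_trace_in_invariants rel_trace_add rel_trace_mult_invariant
        rel_trace_invariant of_nat_eq_mconst)
qed


section \<open>Linear independence modulo a subspace\<close>

text \<open>Defined outside the locale \<open>vector_space\<close>, with the scaling as an argument: a definition
  inside it would also be inherited by the global interpretation \<open>real_vector?\<close>, whose unqualified
  name would then clash with the local one.\<close>

definition independent_mod :: "('a::zero \<Rightarrow> 'b \<Rightarrow> 'b::comm_monoid_add) \<Rightarrow> 'b set \<Rightarrow> 'b set \<Rightarrow> bool" where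
  "independent_mod scale I X \<longleftrightarrow> (\<forall>c. (\<Sum>x\<in>X. scale (c x) x) \<in> I \<longrightarrow> (\<forall>x\<in>X. c x = 0))"

context vector_space
begin

lemma in_span_Un_subspace_iff:
  assumes I: "subspace I" and X: "finite X"
  shows "v \<in> span (X \<union> I) \<longleftrightarrow> (\<exists>c. v - (\<Sum>x\<in>X. c x *s x) \<in> I)"
proof
  assume "v \<in> span (X \<union> I)"
  moreover have "span I = I"
    using I by simp
  ultimately have "v \<in> {y + i | y i. y \<in> span X \<and> i \<in> I}"
    by (simp add: span_Un)
  then obtain y i where yi: "v = y + i" "y \<in> span X" "i \<in> I"
    by blast
  then obtain c where "y = (\<Sum>x\<in>X. c x *s x)"
    using span_finite[OF X] by auto
  with yi show "\<exists>c. v - (\<Sum>x\<in>X. c x *s x) \<in> I"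
    by (intro exI[of _ c]) simp
next
  assume "\<exists>c. v - (\<Sum>x\<in>X. c x *s x) \<in> I"
  then obtain c where c: "v - (\<Sum>x\<in>X. c x *s x) \<in> I" ..
  have "(\<Sum>x\<in>X. c x *s x) \<in> span (X \<union> I)"
    by (intro span_sum span_scale span_base) simp
  moreover have "v - (\<Sum>x\<in>X. c x *s x) \<in> span (X \<union> I)"
    using c by (intro span_base) simp
  ultimately show "v \<in> span (X \<union> I)"
    using span_add by fastforce
qed

lemma in_span_if_nonzero_coeff:
  assumes I: "subspace I" and X: "finite X" "v \<notin> X"
    and c: "c v *s v + (\<Sum>x\<in>X. c x *s x) \<in> I" "c v \<noteq> 0"
  shows "v \<in> span (X \<union> I)"
proof -
  have "inverse (c v) *s (c v *s v + (\<Sum>x\<in>X. c x *s x))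
      = v - (\<Sum>x\<in>X. (- inverse (c v) * c x) *s x)"
    using c(2) by (simp add: scale_right_distrib scale_sum_right sum_negf)
  then have "v - (\<Sum>x\<in>X. (- inverse (c v) * c x) *s x) \<in> I"
    using subspace_scale[OF I c(1)] by metis
  then show ?thesis
    unfolding in_span_Un_subspace_iff[OF I X(1)] by (rule exI[of _ "\<lambda>x. - inverse (c v) * c x"])
qed

lemma not_independent_modE:
  assumes I: "subspace I" and X: "finite X" and "\<not> independent_mod scale I X"
  obtains x where "x \<in> X" "x \<in> span ((X - {x}) \<union> I)"
proof -
  obtain c x where c: "(\<Sum>x\<in>X. c x *s x) \<in> I" and x: "x \<in> X" "c x \<noteq> 0"
    using assms(3) unfolding independent_mod_def by blast
  then have "c x *s x + (\<Sum>y\<in>X - {x}. c y *s y) \<in> I"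
    using X by (simp add: sum.remove)
  then show ?thesis
    using that x X in_span_if_nonzero_coeff[OF I, of "X - {x}" x c] by blast
qed

lemma independent_mod_insert:
  assumes I: "subspace I" and X: "finite X"
    and ind: "independent_mod scale I X" and v: "v \<notin> span (X \<union> I)"
  shows "independent_mod scale I (insert v X)"
  unfolding independent_mod_def
proof (intro allI impI)
  fix c assume c: "(\<Sum>x\<in>insert v X. c x *s x) \<in> I"
  have "v \<notin> X"
    using v span_base by blast
  then have sum: "c v *s v + (\<Sum>x\<in>X. c x *s x) \<in> I"
    using c X by simp
  then have "c v = 0"
    using in_span_if_nonzero_coeff[OF I X \<open>v \<notin> X\<close>] v by blast
  moreover have "\<forall>x\<in>X. c x = 0"
    using sum ind \<open>c v = 0\<close> unfolding independent_mod_def by simp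
  ultimately show "\<forall>x\<in>insert v X. c x = 0"
    by simp
qed

text \<open>Steinitz exchange modulo \<open>I\<close>: extend \<open>X\<close> by a basis \<open>B\<close> of the finite-dimensional
  space \<open>I \<inter> span (X \<union> Y)\<close> and compare \<open>X \<union> B\<close> with \<open>Y \<union> B\<close>.\<close>

lemma independent_mod_card_le:
  assumes I: "subspace I" and fin: "finite X" "finite Y" and ind: "independent_mod scale I X"
    and sp: "X \<subseteq> span (Y \<union> I)"
  shows "card X \<le> card Y"
proof -
  have spanI: "span I = I"
    using I by simp
  let ?U = "span (X \<union> Y)"
  obtain B where B: "B \<subseteq> ?U \<inter> I" "independent B" "?U \<inter> I \<subseteq> span B"
    using basis_exists by metis
  have finB: "finite B"
    using independent_span_bound[of "X \<union> Y" B] fin B(1,2) span_superset by auto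
  have BI: "span B \<subseteq> I"
    using B(1) span_minimal[OF _ I] by blast
  have disj: "X \<inter> B = {}"
  proof (rule ccontr)
    assume "X \<inter> B \<noteq> {}"
    then obtain x where x: "x \<in> X" "x \<in> I"
      using B(1) by blast
    have "(\<Sum>y\<in>X. (if y = x then 1 else 0) *s y) = x"
      using fin(1) x(1) by (simp add: if_distrib[of "\<lambda>c. c *s _"] cong: if_cong)
    then show False
      using ind[unfolded independent_mod_def, rule_format, of "\<lambda>y. if y = x then 1 else 0" x] x
      by simp
  qed
  have "independent (X \<union> B)"
    unfolding independent_explicit_module
  proof (intro allI impI)
    fix t u v
    assume t: "finite t" "t \<subseteq> X \<union> B" and zero: "(\<Sum>v\<in>t. u v *s v) = 0" and v: "v \<in> t"
    have split: "(\<Sum>v\<in>t. u v *s v) = (\<Sum>v\<in>t \<inter> X. u v *s v) + (\<Sum>v\<in>t - X. u v *s v)"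
      using t(1) by (rule sum.Int_Diff)
    have "(\<Sum>v\<in>t - X. u v *s v) \<in> span B"
      using t(2) by (intro span_sum span_scale span_base) blast
    moreover have "(\<Sum>v\<in>t \<inter> X. u v *s v) = - (\<Sum>v\<in>t - X. u v *s v)"
      using zero split by (simp add: eq_neg_iff_add_eq_0)
    ultimately have "(\<Sum>v\<in>t \<inter> X. u v *s v) \<in> I"
      using BI span_neg by auto
    moreover have "(\<Sum>x\<in>X. (if x \<in> t then u x else 0) *s x) = (\<Sum>v\<in>t \<inter> X. u v *s v)"
      using fin(1) by (intro sum.mono_neutral_cong_right) auto
    ultimately have "(\<Sum>x\<in>X. (if x \<in> t then u x else 0) *s x) \<in> I"
      by simp
    note ind[unfolded independent_mod_def, rule_format, OF this]
    then have uX: "\<forall>x\<in>t \<inter> X. u x = 0"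
      by (metis IntE)
    then have "(\<Sum>v\<in>t - X. u v *s v) = 0"
      using zero split by simp
    then have "\<forall>w\<in>t - X. u w = 0"
      using independentD[OF B(2), of "t - X"] t by blast
    then show "u v = 0"
      using uX v by blast
  qed
  moreover have "X \<union> B \<subseteq> span (Y \<union> B)"
  proof -
    have "x \<in> span (Y \<union> B)" if x: "x \<in> X" for x
    proof -
      have "x \<in> {y + i | y i. y \<in> span Y \<and> i \<in> I}"
        using sp x by (auto simp: span_Un spanI)
      then obtain y i where yi: "x = y + i" "y \<in> span Y" "i \<in> I"
        by blast
      have "i = x - y" "x \<in> ?U" "y \<in> ?U"
        using yi x span_mono[of Y "X \<union> Y"] by (auto intro: span_base)
      then have "i \<in> span B"
        using yi(3) B(3) span_diff by blast
      then show ?thesis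
        using yi span_mono[of Y "Y \<union> B"] span_mono[of B "Y \<union> B"] span_add by blast
    qed
    then show ?thesis
      by (auto intro: span_base)
  qed
  ultimately have "card (X \<union> B) \<le> card (Y \<union> B)"
    using independent_span_bound fin finB by blast
  also have "\<dots> \<le> card Y + card B"
    by (rule card_Un_le)
  finally show ?thesis
    using disj fin finB by (simp add: card_Un_disjoint)
qed

lemma span_mod_iff_independent_mod:
  assumes I: "subspace I"
    and M: "finite M" "independent_mod scale I M" "M \<subseteq> V" "V \<subseteq> span (M \<union> I)"
    and X: "finite X" "X \<subseteq> V" "card X = card M"
  shows "V \<subseteq> span (X \<union> I) \<longleftrightarrow> independent_mod scale I X"
proof
  assume V: "V \<subseteq> span (X \<union> I)"
  show "independent_mod scale I X"
  proof (rule ccontr)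
    assume "\<not> independent_mod scale I X"
    then obtain x where x: "x \<in> X" "x \<in> span ((X - {x}) \<union> I)"
      using not_independent_modE[OF I X(1)] by blast
    have "X \<union> I \<subseteq> span ((X - {x}) \<union> I)"
      using x by (auto intro: span_base)
    then have "span (X \<union> I) \<subseteq> span ((X - {x}) \<union> I)"
      using span_minimal subspace_span by blast
    then have "card M \<le> card (X - {x})"
      using independent_mod_card_le[OF I M(1) _ M(2)] X(1) M(3) V by blast
    moreover have "card (X - {x}) < card X"
      using X(1) x(1) by (rule card_Diff1_less)
    ultimately show False
      using X(3) by simp
  qed
next
  assume ind: "independent_mod scale I X"
  show "V \<subseteq> span (X \<union> I)"
  proof
    fix v assume v: "v \<in> V"
    show "v \<in> span (X \<union> I)"
    proof (rule ccontr)
      assume nv: "v \<notin> span (X \<union> I)"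
      then have "v \<notin> X"
        using span_base by blast
      have "card (insert v X) \<le> card M"
        using independent_mod_card_le[OF I _ M(1) independent_mod_insert[OF I X(1) ind nv]]
          X(1,2) v M(4) by blast
      then show False
        using \<open>v \<notin> X\<close> X(1,3) by simp
    qed
  qed
qed

end


section \<open>The graded Nakayama lemma\<close>

interpretation mpoly: vector_space "\<lambda>c (p :: 'k::field mpoly). mconst c * p"
  by unfold_locales (simp_all add: algebra_simps mconst_add mconst_mult)

lemma gen_ideal_subspace: "subalg R \<Longrightarrow> mpoly.subspace (gen_ideal f n R)"
  unfolding mpoly.subspace_def
  by (simp add: gen_ideal_0 gen_ideal_add gen_ideal_mult subalg_mconst)

lemma lin_span_subset_span_gen_ideal:
  assumes R: "subalg R" and f: "\<And>i. i < n \<Longrightarrow> f i \<in> R" and "M \<subseteq> R"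
  shows "lin_span (alg_closure f n) M \<subseteq> mpoly.span (M \<union> gen_ideal f n R)"
proof
  fix y assume "y \<in> lin_span (alg_closure f n) M"
  then obtain T a where y: "y = (\<Sum>x\<in>T. a x * x)" and T: "T \<subseteq> M" "\<forall>x\<in>T. a x \<in> alg_closure f n"
    unfolding lin_span_alg_closure span_over_def by blast
  have "a x * x \<in> mpoly.span (M \<union> gen_ideal f n R)" if x: "x \<in> T" for x
  proof -
    obtain c where c: "a x - mconst c \<in> plus_ideal f n"
      using alg_closure_decomp T(2) x by blast
    have "plus_ideal f n \<subseteq> gen_ideal f n R"
      unfolding plus_ideal_eq_gen_ideal by (rule gen_ideal_mono[OF alg_closure_subset[of R n f, OF R f]])
    then have "x * (a x - mconst c) \<in> gen_ideal f n R"
      using c x T(1) \<open>M \<subseteq> R\<close> by (blast intro: gen_ideal_mult[OF R])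
    then have "x * (a x - mconst c) \<in> mpoly.span (M \<union> gen_ideal f n R)"
      by (intro mpoly.span_base) simp
    moreover have "mconst c * x \<in> mpoly.span (M \<union> gen_ideal f n R)"
      using x T(1) by (intro mpoly.span_scale mpoly.span_base) auto
    moreover have "a x * x = mconst c * x + x * (a x - mconst c)"
      by (simp add: algebra_simps)
    ultimately show ?thesis
      using mpoly.span_add by metis
  qed
  then show "y \<in> mpoly.span (M \<union> gen_ideal f n R)"
    unfolding y by (rule mpoly.span_sum)
qed

locale graded_params =
  fixes R :: "'k::field mpoly set" and f :: "nat \<Rightarrow> 'k mpoly" and n :: nat
  assumes subalg_R: "subalg R"
    and hcomp_in_R: "\<And>r e. r \<in> R \<Longrightarrow> hcomp e r \<in> R"
    and params_in_R: "\<And>i. i < n \<Longrightarrow> f i \<in> R"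
    and params_homog: "\<And>i. i < n \<Longrightarrow> \<exists>e>0. homog_of_deg (f i) e"
begin

lemma graded_nakayama_homog:
  assumes N: "finite N" "\<forall>x\<in>N. is_homog x" and span: "R \<subseteq> mpoly.span (N \<union> gen_ideal f n R)"
    and r: "r \<in> R" "homog_of_deg r e"
  shows "r \<in> span_over (alg_closure f n) N"
  using r
proof (induction e arbitrary: r rule: less_induct)
  case (less e)
  let ?A = "alg_closure f n" and ?L = "span_over (alg_closure f n) N"
  note A = subalg_alg_closure[of f n]
  obtain c where "r - (\<Sum>x\<in>N. mconst (c x) * x) \<in> gen_ideal f n R"
    using span less.prems(1) mpoly.in_span_Un_subspace_iff[OF gen_ideal_subspace[OF subalg_R] N(1)]
    by blast
  then obtain y where y: "r - (\<Sum>x\<in>N. mconst (c x) * x) = (\<Sum>i<n. f i * y i)" "\<forall>i<n. y i \<in> R"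
    unfolding gen_ideal_def by blast
  have "r = hcomp e r"
    using hcomp_homog[OF less.prems(2)] by simp
  also have "\<dots> = hcomp e ((\<Sum>x\<in>N. mconst (c x) * x) + (\<Sum>i<n. f i * y i))"
    by (simp flip: y(1))
  also have "\<dots> = (\<Sum>x\<in>N. mconst (c x) * hcomp e x) + (\<Sum>i<n. hcomp e (f i * y i))"
    by (simp add: hcomp_add hcomp_sum hcomp_mconst_mult)
  finally have r: "r = (\<Sum>x\<in>N. mconst (c x) * hcomp e x) + (\<Sum>i<n. hcomp e (f i * y i))" .
  have "mconst (c x) * hcomp e x \<in> ?L" if "x \<in> N" for x
  proof -
    obtain a where "homog_of_deg x a"
      using N(2) \<open>x \<in> N\<close> unfolding is_homog_def by blast
    then show ?thesis
      using \<open>x \<in> N\<close> span_over_0[OF A]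
      by (simp add: hcomp_homog span_over_single[OF A] subalg_mconst[OF subalg_alg_closure])
  qed
  moreover have "hcomp e (f i * y i) \<in> ?L" if i: "i < n" for i
  proof -
    obtain a where a: "a > 0" "homog_of_deg (f i) a"
      using params_homog[OF i] by blast
    have "hcomp (e - a) (y i) \<in> ?L" if "a \<le> e"
      using a(1) that y(2) i by (intro less.IH[of "e - a"] hcomp_in_R homog_hcomp) auto
    then show ?thesis
      unfolding hcomp_homog_mult[OF a(2)] using span_over_0[OF A] i
      by (auto intro: span_over_mult[OF A] in_alg_closure)
  qed
  ultimately show ?case
    by (subst r) (intro span_over_add[OF A] span_over_sum[OF A], auto)
qed

lemma graded_nakayama:
  assumes "finite N" "\<forall>x\<in>N. is_homog x" "R \<subseteq> mpoly.span (N \<union> gen_ideal f n R)"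
  shows "R \<subseteq> lin_span (alg_closure f n) N"
proof
  fix r assume "r \<in> R"
  then have "hcomp e r \<in> span_over (alg_closure f n) N" for e
    using graded_nakayama_homog[OF assms hcomp_in_R homog_hcomp] by blast
  then have "(\<Sum>e\<in>mdeg ` Poly_Mapping.keys r. hcomp e r) \<in> span_over (alg_closure f n) N"
    by (intro span_over_sum[OF subalg_alg_closure])
  then show "r \<in> lin_span (alg_closure f n) N"
    by (simp add: sum_hcomp lin_span_alg_closure)
qed

lemma generates_iff_span_mod:
  assumes N: "finite N" "N \<subseteq> R" "\<forall>x\<in>N. is_homog x"
  shows "R = lin_span (alg_closure f n) N \<longleftrightarrow> R \<subseteq> mpoly.span (N \<union> gen_ideal f n R)"
proof
  assume "R = lin_span (alg_closure f n) N"
  then show "R \<subseteq> mpoly.span (N \<union> gen_ideal f n R)"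
    using lin_span_subset_span_gen_ideal[OF subalg_R params_in_R N(2)] by simp
next
  assume "R \<subseteq> mpoly.span (N \<union> gen_ideal f n R)"
  moreover have "lin_span (alg_closure f n) N \<subseteq> R"
    unfolding lin_span_alg_closure
    using alg_closure_subset[of R n f, OF subalg_R params_in_R] N(2) by (rule span_over_subset[OF subalg_R])
  ultimately show "R = lin_span (alg_closure f n) N"
    using graded_nakayama N by blast
qed

lemma min_hom_gen_set_independent_mod:
  assumes M: "min_hom_gen_set (alg_closure f n) R M" "finite M"
  shows "independent_mod (\<lambda>c p. mconst c * p) (gen_ideal f n R) M"
proof (rule ccontr)
  note J = gen_ideal_subspace[OF subalg_R]
  have MR: "M \<subseteq> R" "\<forall>x\<in>M. is_homog x"
    using M(1) unfolding min_hom_gen_set_def by auto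
  assume "\<not> independent_mod (\<lambda>c p. mconst c * p) (gen_ideal f n R) M"
  then obtain x where x: "x \<in> M" "x \<in> mpoly.span ((M - {x}) \<union> gen_ideal f n R)"
    using mpoly.not_independent_modE[OF J M(2)] by blast
  then have "M \<union> gen_ideal f n R \<subseteq> mpoly.span ((M - {x}) \<union> gen_ideal f n R)"
    by (auto intro: mpoly.span_base)
  then have "mpoly.span (M \<union> gen_ideal f n R) \<subseteq> mpoly.span ((M - {x}) \<union> gen_ideal f n R)"
    using mpoly.span_minimal mpoly.subspace_span by blast
  moreover have "R \<subseteq> mpoly.span (M \<union> gen_ideal f n R)"
    using M(1) generates_iff_span_mod[OF M(2) MR] unfolding min_hom_gen_set_def by blast
  ultimately have "R = lin_span (alg_closure f n) (M - {x})"
    using generates_iff_span_mod[of "M - {x}"] M(2) MR by blast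
  moreover have "M - {x} \<subset> M"
    using x(1) by blast
  ultimately show False
    using M(1) unfolding min_hom_gen_set_def by blast
qed

lemma generates_iff_independent_mod:
  assumes M: "min_hom_gen_set (alg_closure f n) R M" "finite M"
    and X: "finite X" "X \<subseteq> R" "\<forall>x\<in>X. is_homog x" "card X = card M"
  shows "R = lin_span (alg_closure f n) X \<longleftrightarrow> independent_mod (\<lambda>c p. mconst c * p) (gen_ideal f n R) X"
proof -
  have MR: "M \<subseteq> R" "\<forall>x\<in>M. is_homog x" "R \<subseteq> mpoly.span (M \<union> gen_ideal f n R)"
    using M generates_iff_span_mod[OF M(2)] unfolding min_hom_gen_set_def by auto
  show ?thesis
    unfolding generates_iff_span_mod[OF X(1-3)]
    using mpoly.span_mod_iff_independent_mod[OF gen_ideal_subspace[OF subalg_R] M(2)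
        min_hom_gen_set_independent_mod[OF M] MR(1,3) X(1,2,4)] .
qed

end


theorem mainTheorem3:
  fixes G :: "('g, 'b) monoid_scheme" and H :: "'g set"
    and d :: nat and rho :: "'g \<Rightarrow> nat \<Rightarrow> nat \<Rightarrow> 'k::field"
    and f :: "nat \<Rightarrow> 'k mpoly" and n :: nat
  defines "R \<equiv> invariants d rho (carrier G)"
      and "S \<equiv> invariants d rho H"
  assumes "group G" and "finite (carrier G)" and "is_rep G d rho"
    and "hsop R f n"
    and "subgroup H G"
    and "\<not> CHAR('k) dvd card (rcosets\<^bsub>G\<^esub> H)"
  shows "{r \<in> R. r \<in> gen_ideal f n S} = lin_span (plus_ideal f n) R \<and>
     (\<forall>r\<in>R. \<forall>r'\<in>R. (r - r' \<in> gen_ideal f n S) \<longleftrightarrow> (r - r' \<in> lin_span (plus_ideal f n) R)) \<and>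
     (\<forall>\<G>. free_module (alg_closure f n) R \<longrightarrow>
          \<G> \<subseteq> R \<longrightarrow> (\<forall>g\<in>\<G>. is_homog g) \<longrightarrow> finite \<G> \<longrightarrow>
          (\<exists>M. min_hom_gen_set (alg_closure f n) R M \<and> finite M \<and>
               image_mset hdeg (mset_set \<G>) = image_mset hdeg (mset_set M)) \<longrightarrow>
          (R = lin_span (alg_closure f n) \<G> \<longleftrightarrow>
           (\<forall>c :: 'k mpoly \<Rightarrow> 'k. (\<Sum>g\<in>\<G>. mconst (c g) * g) \<in> gen_ideal f n S
                \<longrightarrow> (\<forall>g\<in>\<G>. c g = 0))))"
proof -
  have f: "\<And>i. i < n \<Longrightarrow> f i \<in> R" and f_homog: "\<And>i. i < n \<Longrightarrow> \<exists>e>0. homog_of_deg (f i) e"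
    using \<open>hsop R f n\<close> by (auto simp: hsop_def)
  interpret graded_params R f n
    using f f_homog by unfold_locales (simp_all add: R_def subalg_invariants hcomp_in_invariants)
  have contraction: "R \<inter> gen_ideal f n S = gen_ideal f n R"
    unfolding R_def S_def using assms(3,5,7,8) f[unfolded R_def] by (rule invariants_inter_gen_ideal)
  have part1: "{r \<in> R. r \<in> gen_ideal f n S} = lin_span (plus_ideal f n) R"
    using contraction lin_span_plus_ideal[of R n f, OF subalg_R f] by blast
  have part3: "R = lin_span (alg_closure f n) \<G> \<longleftrightarrow>
      (\<forall>c. (\<Sum>g\<in>\<G>. mconst (c g) * g) \<in> gen_ideal f n S \<longrightarrow> (\<forall>g\<in>\<G>. c g = 0))"
    if \<G>: "\<G> \<subseteq> R" "\<forall>g\<in>\<G>. is_homog g" "finite \<G>"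
      and M: "min_hom_gen_set (alg_closure f n) R M" "finite M"
        "image_mset hdeg (mset_set \<G>) = image_mset hdeg (mset_set M)" for \<G> M
  proof -
    have "card \<G> = card M"
      using arg_cong[OF M(3), of size] by simp
    then have "R = lin_span (alg_closure f n) \<G> \<longleftrightarrow>
        (\<forall>c. (\<Sum>g\<in>\<G>. mconst (c g) * g) \<in> gen_ideal f n R \<longrightarrow> (\<forall>g\<in>\<G>. c g = 0))"
      using generates_iff_independent_mod[OF M(1,2) \<G>(3,1,2)] by (simp add: independent_mod_def)
    moreover have "(\<Sum>g\<in>\<G>. mconst (c g) * g) \<in> R" for c
      using \<G>(1) by (intro subalg_sum[OF subalg_R] subalg_mult[OF subalg_R] subalg_mconst[OF subalg_R]) auto
    ultimately show ?thesis
      using contraction by blast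
  qed
  show ?thesis
  proof (intro conjI ballI allI impI)
    show "{r \<in> R. r \<in> gen_ideal f n S} = lin_span (plus_ideal f n) R"
      by (rule part1)
    show "r - r' \<in> gen_ideal f n S \<longleftrightarrow> r - r' \<in> lin_span (plus_ideal f n) R" if "r \<in> R" "r' \<in> R" for r r'
      using part1 subalg_diff[OF subalg_R that] by blast
  qed (use part3 in blast)
qed

end
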